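(* For every $M\in\Lambda$, for every term $t$ with $[\![M]\!]\rightarrow^* t$ in $\Phi$, and for every occurrence of a constructor $c_{x,N}$ in $t$, $N$ is a subterm of $M$.
   Context: $\lambda$-terms: $M::=x\mid\lambda x.M\mid MN$, $x$ from a denumerable set $\Upsilon$ of variables with a fixed total order; $\Lambda$ is the set of terms; $FV(M)$ is the ordered sequence of free variables. $\Phi$ is the constructor rewrite system with binary function symbol $\mathbf{app}$ and, for every $M\in\Lambda$, $x\in\Upsilon$, a constructor $c_{x,M}$ of arity the length of $FV(\lambda x.M)$. $[\![x]\!]=x$, $[\![\lambda x.M]\!]=c_{x,M}(x_1,\dots,x_n)$ with $FV(\lambda x.M)=x_1,\dots,x_n$, $[\![MN]\!]=\mathbf{app}([\![M]\!],[\![N]\!])$. Rules: $\mathbf{app}(c_{x,M}(x_1,\dots,x_n),x)\rightarrow[\![M]\!]$ with $FV(\lambda x.M)=x_1,\dots,x_n$. Rewriting is call-by-value: a step replaces anywhere a subterm $l\sigma$ by $r\sigma$, $l\rightarrow r$ a rule, $\sigma$ mapping variables to constructor terms (closed terms built only from constructors). *)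

theory Defs
  imports Main
begin

text \<open>Variables are natural numbers (a denumerable set with a fixed total order).\<close>
type_synonym var = nat

datatype lterm = Var var | Lam var lterm | App lterm lterm

fun fvs :: "lterm \<Rightarrow> var set" where
  "fvs (Var x) = {x}"
| "fvs (Lam x M) = fvs M - {x}"
| "fvs (App M N) = fvs M \<union> fvs N"

definition FV :: "lterm \<Rightarrow> var list" where
  "FV M = sorted_list_of_set (fvs M)"

fun subterms :: "lterm \<Rightarrow> lterm set" where
  "subterms (Var x) = {Var x}"
| "subterms (Lam x M) = insert (Lam x M) (subterms M)"
| "subterms (App M N) = insert (App M N) (subterms M \<union> subterms N)"

text \<open>Terms of the rewrite system Phi: variables, the binary symbol app, and
  constructors c_{x,M} applied to argument lists.\<close>
datatype fterm = FVar var | FApp fterm fterm | Con var lterm "fterm list"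

fun tr :: "lterm \<Rightarrow> fterm" where
  "tr (Var x) = FVar x"
| "tr (Lam x M) = Con x M (map FVar (FV (Lam x M)))"
| "tr (App M N) = FApp (tr M) (tr N)"

fun is_cterm :: "fterm \<Rightarrow> bool" where
  "is_cterm (FVar x) = False"
| "is_cterm (FApp s t) = False"
| "is_cterm (Con x M ts) = (\<forall>t\<in>set ts. is_cterm t)"

fun subst :: "(var \<Rightarrow> fterm) \<Rightarrow> fterm \<Rightarrow> fterm" where
  "subst \<sigma> (FVar x) = \<sigma> x"
| "subst \<sigma> (FApp s t) = FApp (subst \<sigma> s) (subst \<sigma> t)"
| "subst \<sigma> (Con x M ts) = Con x M (map (subst \<sigma>) ts)"

text \<open>Rules of Phi: app(c_{x,M}(x_1,...,x_n), x) -> [[M]] with FV(lambda x.M) = x_1,...,x_n.\<close>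
definition rule :: "fterm \<Rightarrow> fterm \<Rightarrow> bool" where
  "rule l r \<longleftrightarrow> (\<exists>x M. l = FApp (tr (Lam x M)) (FVar x) \<and> r = tr M)"

inductive cbv_step :: "fterm \<Rightarrow> fterm \<Rightarrow> bool" where
  root: "\<lbrakk> rule l r; \<forall>y. is_cterm (\<sigma> y) \<rbrakk> \<Longrightarrow> cbv_step (subst \<sigma> l) (subst \<sigma> r)"
| app1: "cbv_step s t \<Longrightarrow> cbv_step (FApp s u) (FApp t u)"
| app2: "cbv_step s t \<Longrightarrow> cbv_step (FApp u s) (FApp u t)"
| con: "cbv_step s t \<Longrightarrow> cbv_step (Con x M (us @ s # vs)) (Con x M (us @ t # vs))"

fun con_occs :: "fterm \<Rightarrow> (var \<times> lterm) set" where
  "con_occs (FVar x) = {}"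
| "con_occs (FApp s t) = con_occs s \<union> con_occs t"
| "con_occs (Con x N ts) = insert (x, N) (\<Union>t\<in>set ts. con_occs t)"

end

theory Submission
  imports Defs
begin

text \<open>Rewriting never creates a constructor: a root step replaces
  app(c_{x,K}(\<dots>), x)\<sigma> by [[K]]\<sigma>, whose constructors come either from [[K]], and are
  then indexed by subterms of K, or from the values \<sigma> y of free variables y of K,
  which already occur in the redex. Hence every constructor of a reduct is indexed
  by a subterm of the index of some constructor of the original term, and the
  constructors of [[M]] are indexed by subterms of M.\<close>

fun fvars :: "fterm \<Rightarrow> var set" where
  "fvars (FVar x) = {x}"
| "fvars (FApp s t) = fvars s \<union> fvars t"
| "fvars (Con x M ts) = (\<Union>t\<in>set ts. fvars t)"

lemma con_occs_subst:
  "con_occs (subst \<sigma> t) = con_occs t \<union> (\<Union>y\<in>fvars t. con_occs (\<sigma> y))"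
  by (induction t) auto

lemma finite_fvs: "finite (fvs N)"
  by (induction N) auto

lemma fvars_tr: "fvars (tr N) = fvs N"
  by (induction N) (auto simp: FV_def finite_fvs)

lemma subterms_refl: "N \<in> subterms N"
  by (cases N) auto

lemma subterms_trans: "K \<in> subterms N \<Longrightarrow> N \<in> subterms M \<Longrightarrow> K \<in> subterms M"
  by (induction M) auto

lemma con_occs_tr: "(x, N) \<in> con_occs (tr M) \<Longrightarrow> N \<in> subterms M"
  by (induction M) (auto simp: subterms_refl)

lemma con_occs_rule_rhs:
  assumes "rule l r" and "(x, N) \<in> con_occs (subst \<sigma> r)"
  shows "\<exists>y K. (y, K) \<in> con_occs (subst \<sigma> l) \<and> N \<in> subterms K"
proof -
  obtain z K where l: "l = FApp (tr (Lam z K)) (FVar z)" and r: "r = tr K"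
    using \<open>rule l r\<close> unfolding rule_def by blast
  have redex_con: "(z, K) \<in> con_occs (subst \<sigma> l)"
    by (simp add: l)
  have redex_fvars: "fvs K \<subseteq> fvars l"
    by (auto simp: l fvars_tr simp del: tr.simps)
  from assms(2) consider "(x, N) \<in> con_occs (tr K)"
    | y where "y \<in> fvs K" "(x, N) \<in> con_occs (\<sigma> y)"
    by (auto simp: r con_occs_subst fvars_tr)
  then show ?thesis
  proof cases
    case 1
    then show ?thesis using redex_con con_occs_tr by blast
  next
    case 2
    then have "(x, N) \<in> con_occs (subst \<sigma> l)"
      using redex_fvars by (auto simp: con_occs_subst)
    then show ?thesis using subterms_refl by blast
  qed
qed

lemma cbv_step_con_occs:
  "cbv_step s t \<Longrightarrow> (x, N) \<in> con_occs t \<Longrightarrow> \<exists>y K. (y, K) \<in> con_occs s \<and> N \<in> subterms K"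
proof (induction rule: cbv_step.induct)
  case (root l r \<sigma>)
  then show ?case using con_occs_rule_rhs by blast
qed (auto intro: subterms_refl)

lemma cbv_steps_con_occs:
  assumes "cbv_step\<^sup>*\<^sup>* s t" and "(x, N) \<in> con_occs t"
  shows "\<exists>y K. (y, K) \<in> con_occs s \<and> N \<in> subterms K"
  using assms
proof (induction arbitrary: x N rule: rtranclp_induct)
  case base
  then show ?case using subterms_refl by blast
next
  case (step t u)
  obtain y K where "(y, K) \<in> con_occs t" "N \<in> subterms K"
    using cbv_step_con_occs [OF step.hyps(2) step.prems] by blast
  then obtain y' K' where "(y', K') \<in> con_occs s" "K \<in> subterms K'"
    using step.IH by blast
  then show ?case using \<open>N \<in> subterms K\<close> subterms_trans by blast
qed

theorem proposition1:
  fixes M :: lterm and t :: fterm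
  assumes "cbv_step\<^sup>*\<^sup>* (tr M) t"
  shows "\<forall>x N. (x, N) \<in> con_occs t \<longrightarrow> N \<in> subterms M"
  using cbv_steps_con_occs [OF assms] con_occs_tr subterms_trans by blast

end
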